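(* Consider an unlabeled tabletop rearrangement instance in which all $n$ objects have congruent footprints, each footprint being a regular $d$-gon ($d\ge 3$) of the same size (placed at arbitrary positions and orientations). Then every vertex of the unlabeled dependency graph of the instance has degree at most $19$.
   Context: A tabletop rearrangement instance consists of $n$ objects (generalized cylinders of equal height, so only their planar footprints matter) in a bounded planar workspace, a start arrangement and a goal arrangement. An arrangement assigns to each object a pose in $SE(2)$; it is feasible if no two placed footprints overlap, where two placed footprints overlap if their interiors intersect. Both the start and goal arrangements are feasible. In the unlabeled setting objects are interchangeable. The unlabeled dependency graph is the bipartite graph with one start vertex for each start pose and one goal vertex for each goal pose, with an edge between a start vertex and a goal vertex iff a footprint placed at that start pose overlaps a footprint placed at that goal pose. *)

theory Defs
  imports "HOL-Analysis.Analysis"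
begin

text \<open>The plane is modelled as the complex numbers. A pose in SE(2) is a pair
  (rotation angle, translation).\<close>

type_synonym pose = "real \<times> complex"

definition regular_polygon :: "nat \<Rightarrow> real \<Rightarrow> complex set" where
  "regular_polygon d r =
     convex hull {complex_of_real r * cis (2 * pi * real k / real d) | k. k < d}"

definition place :: "complex set \<Rightarrow> pose \<Rightarrow> complex set" where
  "place F p = (\<lambda>z. snd p + cis (fst p) * z) ` F"

definition overlap :: "complex set \<Rightarrow> complex set \<Rightarrow> bool" where
  "overlap A B \<longleftrightarrow> interior A \<inter> interior B \<noteq> {}"

definition feasible :: "complex set \<Rightarrow> nat \<Rightarrow> (nat \<Rightarrow> pose) \<Rightarrow> bool" where
  "feasible F n a \<longleftrightarrow>
     (\<forall>i<n. \<forall>j<n. i \<noteq> j \<longrightarrow> \<not> overlap (place F (a i)) (place F (a j)))"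

text \<open>Unlabeled dependency graph (bipartite): edge (i, j) between start vertex i
  and goal vertex j iff the footprint at start pose i overlaps the one at goal pose j.\<close>
definition dep_edges :: "complex set \<Rightarrow> nat \<Rightarrow> (nat \<Rightarrow> pose) \<Rightarrow> (nat \<Rightarrow> pose) \<Rightarrow> (nat \<times> nat) set" where
  "dep_edges F n s g =
     {(i, j). i < n \<and> j < n \<and> overlap (place F (s i)) (place F (g j))}"

definition start_degree :: "complex set \<Rightarrow> nat \<Rightarrow> (nat \<Rightarrow> pose) \<Rightarrow> (nat \<Rightarrow> pose) \<Rightarrow> nat \<Rightarrow> nat" where
  "start_degree F n s g i = card {j. (i, j) \<in> dep_edges F n s g}"

definition goal_degree :: "complex set \<Rightarrow> nat \<Rightarrow> (nat \<Rightarrow> pose) \<Rightarrow> (nat \<Rightarrow> pose) \<Rightarrow> nat \<Rightarrow> nat" where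
  "goal_degree F n s g j = card {i. (i, j) \<in> dep_edges F n s g}"

end

theory Submission
  imports Defs
begin

text \<open>A footprint overlapping the one at pose p contains a point within distance r of the
  centre of p, and the goal footprints have pairwise disjoint interiors, so an area comparison
  bounds their number. For d \<ge> 4 the inscribed discs, of radius r cos(\<pi>/d) \<ge> 0.7 r, lie in
  the disc of radius 2.7 r about that centre, so at most 729/49 < 15 of them fit. For
  triangles the inscribed disc is too small; instead the triangles themselves, of area
  (3\<surd>3/4) r^2 and diameter \<surd>3 r, lie in the disc of radius (1 + \<surd>3) r, which leaves room
  for at most 18 of them. Swapping the roles of start and goal bounds the goal degrees.\<close>

lemma measure_interior_convex_compact:
  fixes S :: "'a::euclidean_space set"
  assumes "convex S" and "compact S"
  shows "measure lborel (interior S) = measure lborel S"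
proof -
  have "measure lebesgue (interior S) = measure lebesgue S"
    using assms
    by (intro measure_interior negligible_convex_frontier) (auto simp: compact_imp_bounded)
  then show ?thesis
    using assms by (simp add: compact_imp_closed)
qed

lemma card_mult_le_measure_of_disjoint_family:
  assumes "finite J" and "disjoint_family_on A J"
    and "\<And>j. j \<in> J \<Longrightarrow> A j \<in> sets M" and "\<And>j. j \<in> J \<Longrightarrow> A j \<subseteq> B"
    and "B \<in> fmeasurable M" and "\<And>j. j \<in> J \<Longrightarrow> m \<le> measure M (A j)"
  shows "real (card J) * m \<le> measure M B"
proof -
  have fin: "A j \<in> fmeasurable M" if "j \<in> J" for j
    using assms(3-5) that by (blast intro: fmeasurableI2)
  have "real (card J) * m \<le> (\<Sum>j\<in>J. measure M (A j))"
    using sum_mono[of J "\<lambda>_. m", OF assms(6)] by simp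
  also have "\<dots> = measure M (\<Union>j\<in>J. A j)"
    using assms(1,2) fin
    by (intro measure_UNION'[symmetric]) (auto simp: disjoint_family_on_def pairwise_def disjnt_def)
  also have "\<dots> \<le> measure M B"
    using assms(1,4,5) fin by (intro measure_mono_fmeasurable) auto
  finally show ?thesis .
qed

text \<open>Lebesgue measure on \<complex> is transported from real^2, where the library provides Heron's
  formula.\<close>

definition complex_of_vec :: "real^2 \<Rightarrow> complex" where
  "complex_of_vec v = Complex (v $ 1) (v $ 2)"

lemma complex_of_vec_vector [simp]: "complex_of_vec (vector [x, y]) = Complex x y"
  by (simp add: complex_of_vec_def)

lemma inj_complex_of_vec: "inj complex_of_vec"
  by (rule injI) (simp add: complex_of_vec_def vec_eq_iff forall_2)

lemma linear_complex_of_vec: "linear complex_of_vec"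
  by (rule linearI) (simp_all add: complex_of_vec_def complex_eq_iff)

lemma continuous_on_complex_of_vec: "continuous_on S complex_of_vec"
  using linear_complex_of_vec by (simp add: linear_continuous_on linear_conv_bounded_linear)

lemma dist_complex_of_vec: "dist (complex_of_vec u) (complex_of_vec v) = dist u v"
  by (simp add: complex_of_vec_def dist_norm norm_vec_def L2_set_def sum_2 cmod_def
      power2_norm_eq_inner)

lemma lborel_complex_eq_distr: "(lborel :: complex measure) = distr lborel borel complex_of_vec"
proof (rule lborel_eqI)
  fix l u :: complex
  assume lu: "\<And>b. b \<in> Basis \<Longrightarrow> l \<bullet> b \<le> u \<bullet> b"
  have Basis_2: "(Basis :: (real^2) set) = {axis 1 1, axis 2 1}"
    by (auto simp: Basis_vec_def) (metis exhaust_2)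
  have "complex_of_vec -` box l u = box (vector [Re l, Im l]) (vector [Re u, Im u])"
    by (auto simp: mem_box Basis_complex_def Basis_2 complex_of_vec_def inner_axis)
  moreover have "complex_of_vec \<in> borel_measurable lborel"
    by (simp add: borel_measurable_continuous_onI continuous_on_complex_of_vec)
  ultimately show
    "emeasure (distr lborel borel complex_of_vec) (box l u) = (\<Prod>b\<in>Basis. (u - l) \<bullet> b)"
    using lu[of 1] lu[of \<i>]
    by (simp add: emeasure_distr emeasure_lborel_box_eq Basis_complex_def Basis_2 inner_axis
        axis_eq_axis)
qed simp

lemma measure_complex_of_vec_image:
  assumes "compact S"
  shows "measure lborel (complex_of_vec ` S) = measure lborel S"
proof -
  have "complex_of_vec ` S \<in> sets borel"
    using assms by (simp add: borel_compact compact_continuous_image continuous_on_complex_of_vec)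
  moreover have "complex_of_vec \<in> borel_measurable lborel"
    by (simp add: borel_measurable_continuous_onI continuous_on_complex_of_vec)
  ultimately show ?thesis
    by (subst lborel_complex_eq_distr)
      (simp add: measure_distr inj_vimage_image_eq inj_complex_of_vec)
qed

lemma measure_equilateral_triangle:
  fixes A B C :: complex
  assumes "a \<ge> 0" and "dist A B = a" and "dist A C = a" and "dist B C = a"
  shows "measure lborel (convex hull {A, B, C}) = sqrt 3 / 4 * a\<^sup>2"
proof -
  define vec_of where "vec_of z = (vector [Re z, Im z] :: real^2)" for z
  have inv: "complex_of_vec (vec_of z) = z" for z
    by (simp add: vec_of_def)
  have "convex hull {A, B, C} = complex_of_vec ` (convex hull {vec_of A, vec_of B, vec_of C})"
    by (simp add: convex_hull_linear_image linear_complex_of_vec inv)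
  then have "measure lborel (convex hull {A, B, C})
      = measure lborel (convex hull {vec_of A, vec_of B, vec_of C})"
    by (simp add: measure_complex_of_vec_image finite_imp_compact_convex_hull)
  also have "\<dots> = sqrt (3 * a / 2 * (a / 2) ^ 3)"
    using assms dist_complex_of_vec[of "vec_of _" "vec_of _"]
    by (subst heron) (simp add: inv field_simps power3_eq_cube)
  also have "3 * a / 2 * (a / 2) ^ 3 = 3 * (a\<^sup>2 / 4)\<^sup>2"
    by (simp add: power_divide power2_eq_square power3_eq_cube)
  also have "sqrt \<dots> = sqrt 3 / 4 * a\<^sup>2"
    by (simp add: real_sqrt_mult)
  finally show ?thesis .
qed

lemma place_convex_hull: "place (convex hull X) p = convex hull (place X p)"
proof -
  have "linear ((*) (cis (fst p)))"
    by (rule linearI) (simp_all add: algebra_simps scaleR_conv_of_real)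
  moreover have "place S p = (+) (snd p) ` ((*) (cis (fst p)) ` S)" for S
    by (simp add: place_def image_image)
  ultimately show ?thesis
    by (simp add: convex_hull_translation convex_hull_linear_image)
qed

lemma dist_rigid_motion: "dist (snd p + cis (fst p) * x) (snd p + cis (fst p) * y) = dist x y"
  by (simp add: dist_norm norm_mult flip: right_diff_distrib)

lemma place_subset_cball: "F \<subseteq> cball 0 \<rho> \<Longrightarrow> place F p \<subseteq> cball (snd p) \<rho>"
  using dist_rigid_motion[of p 0] by (force simp: place_def)

lemma ball_subset_place:
  assumes "ball 0 \<rho> \<subseteq> F"
  shows "ball (snd p) \<rho> \<subseteq> place F p"
proof
  fix w assume "w \<in> ball (snd p) \<rho>"
  moreover define z where "z = cnj (cis (fst p)) * (w - snd p)"
  ultimately have "z \<in> F"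
    using assms by (auto simp: norm_mult dist_norm norm_minus_commute)
  moreover have "w = snd p + cis (fst p) * z"
    by (simp add: z_def cis_cnj mult.assoc[symmetric] cis_mult)
  ultimately show "w \<in> place F p"
    unfolding place_def by blast
qed

lemma overlap_sym: "overlap A B \<longleftrightarrow> overlap B A"
  by (auto simp: overlap_def)

lemma regular_polygon_subset_cball: "0 \<le> r \<Longrightarrow> regular_polygon d r \<subseteq> cball 0 r"
  unfolding regular_polygon_def by (rule hull_minimal) (auto simp: norm_mult)

lemma exists_vertex_angle_close:
  assumes "d > 0"
  shows "\<exists>k<d. cos (pi / real d) \<le> cos (2 * pi * real k / real d - \<phi>)"
proof -
  define k0 where "k0 = round (\<phi> * real d / (2 * pi))"
  define k where "k = nat (k0 mod int d)"
  have "k < d"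
    using assms by (simp add: k_def nat_less_iff)
  have "k0 = int d * (k0 div int d) + int k"
    using assms by (simp add: k_def)
  then have "real_of_int k0 = real d * real_of_int (k0 div int d) + real k"
    by (metis of_int_add of_int_mult of_int_of_nat_eq)
  then have "2 * pi * real_of_int (k0 div int d) + (2 * pi * real k / real d - \<phi>)
      = 2 * pi / real d * (real_of_int k0 - \<phi> * real d / (2 * pi))"
    using assms by (simp add: field_simps)
  also have "\<bar>\<dots>\<bar> \<le> 2 * pi / real d * (1 / 2)"
    unfolding abs_mult k0_def using assms by (intro mult_mono of_int_round_abs_le) auto
  finally have
    "\<bar>2 * pi * real_of_int (k0 div int d) + (2 * pi * real k / real d - \<phi>)\<bar> \<le> pi / real d"
    by simp
  then have "cos (pi / real d) \<le> cos (2 * pi * real k / real d - \<phi>)"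
    by (rule cos_monotone_aux) (use assms in \<open>simp add: divide_le_eq\<close>)
  with \<open>k < d\<close> show ?thesis by blast
qed

lemma ball_subset_regular_polygon:
  assumes "d > 0" and "r > 0"
  shows "ball 0 (r * cos (pi / real d)) \<subseteq> regular_polygon d r"
proof
  fix z :: complex assume z: "z \<in> ball 0 (r * cos (pi / real d))"
  define V where "V = {complex_of_real r * cis (2 * pi * real k / real d) | k. k < d}"
  have P: "regular_polygon d r = convex hull V"
    by (simp add: regular_polygon_def V_def)
  \<comment> \<open>A line separating z from the polygon would leave the vertex closest in angle to its
    normal on the same side as z.\<close>
  show "z \<in> regular_polygon d r"
  proof (rule ccontr)
    assume "z \<notin> regular_polygon d r"
    moreover have "closed (regular_polygon d r)"
      unfolding P V_def by (simp add: compact_imp_closed finite_imp_compact_convex_hull)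
    ultimately obtain a b where ab: "inner a z < b" "\<forall>x\<in>regular_polygon d r. b < inner a x"
      using separating_hyperplane_closed_point[of "regular_polygon d r" z] P by auto
    have "complex_of_real r \<in> regular_polygon d r"
      unfolding P V_def using assms(1) by (intro hull_inc) (auto intro!: exI[of _ 0])
    then have "a \<noteq> 0"
      using ab by auto
    define \<phi> where "\<phi> = Arg (- a)"
    have "cis \<phi> = - a / complex_of_real (cmod a)"
      unfolding \<phi>_def using \<open>a \<noteq> 0\<close>
      by (simp add: cis_Arg sgn_div_norm divide_inverse scaleR_conv_of_real mult.commute)
    then have a: "a = - complex_of_real (cmod a) * cis \<phi>"
      using \<open>a \<noteq> 0\<close> by (simp add: field_simps)
    obtain k where k: "k < d" "cos (pi / real d) \<le> cos (2 * pi * real k / real d - \<phi>)"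
      using exists_vertex_angle_close[OF assms(1)] by blast
    define v where "v = complex_of_real r * cis (2 * pi * real k / real d)"
    have "v \<in> regular_polygon d r"
      unfolding P V_def v_def using k by (intro hull_inc) blast
    have "inner a v = - cmod a * r * cos (2 * pi * real k / real d - \<phi>)"
      by (subst a) (simp add: v_def inner_complex_def cos_diff algebra_simps)
    also have "\<dots> \<le> - cmod a * r * cos (pi / real d)"
      using k assms by (simp add: mult_left_mono)
    also have "\<dots> < - cmod a * cmod z"
      using z \<open>a \<noteq> 0\<close> by (simp add: dist_norm mult.commute)
    also have "\<dots> \<le> inner a z"
      using Cauchy_Schwarz_ineq2[of a z] by (simp add: abs_le_iff)
    finally show False
      using ab \<open>v \<in> regular_polygon d r\<close> by force
  qed
qed

lemma ball_subset_regular_polygon_ge_4: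
  assumes "d \<ge> 4" and "r > 0"
  shows "ball 0 (7/10 * r) \<subseteq> regular_polygon d r"
proof -
  have "sqrt 2 / 2 \<le> cos (pi / real d)"
    using assms(1) by (subst cos_45[symmetric], intro cos_monotone_0_pi_le) (auto simp: field_simps)
  moreover have "1.4 \<le> sqrt (2::real)"
    by (rule real_le_rsqrt) (simp add: power2_eq_square)
  ultimately have "ball 0 (7/10 * r) \<subseteq> ball 0 (r * cos (pi / real d))"
    using assms(2) by (intro subset_ball) simp
  also have "\<dots> \<subseteq> regular_polygon d r"
    using assms by (intro ball_subset_regular_polygon) auto
  finally show ?thesis .
qed

lemma regular_polygon_3:
  "regular_polygon 3 r = convex hull
     {complex_of_real r, r * Complex (-1/2) (sqrt 3 / 2), r * Complex (-1/2) (- sqrt 3 / 2)}"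
proof -
  have "{k. k < (3::nat)} = {0, 1, 2}"
    by auto
  moreover have "cis (2 * pi / 3) = Complex (-1/2) (sqrt 3 / 2)"
    by (simp add: complex_eq_iff cos_120 sin_120)
  moreover have "cis (2 * pi * 2 / 3) = Complex (-1/2) (- sqrt 3 / 2)"
    using cis_mult[of "2 * pi / 3" "2 * pi / 3"] by (simp add: complex_eq_iff cos_120 sin_120)
  ultimately show ?thesis
    unfolding regular_polygon_def by (simp add: setcompr_eq_image image_insert)
qed

lemma place_regular_triangle_equilateral:
  assumes "0 \<le> r"
  obtains A B C where "place (regular_polygon 3 r) p = convex hull {A, B, C}"
    and "dist A B = sqrt 3 * r" and "dist A C = sqrt 3 * r" and "dist B C = sqrt 3 * r"
proof -
  define t where "t z = snd p + cis (fst p) * z" for z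
  define A B C where "A = complex_of_real r" and "B = r * Complex (-1/2) (sqrt 3 / 2)"
    and "C = r * Complex (-1/2) (- sqrt 3 / 2)"
  have "place (regular_polygon 3 r) p = convex hull {t A, t B, t C}"
    unfolding regular_polygon_3 place_convex_hull by (simp add: place_def t_def A_def B_def C_def)
  moreover have "dist (t u) (t v) = dist u v" for u v
    unfolding t_def by (rule dist_rigid_motion)
  moreover have "dist A B = sqrt 3 * r" "dist A C = sqrt 3 * r" "dist B C = sqrt 3 * r"
  proof -
    have "9 * (r * r) / 4 + r * sqrt 3 * (r * sqrt 3) / 4 = 3 * r\<^sup>2"
      by (simp add: field_simps power2_eq_square)
    then show "dist A B = sqrt 3 * r" "dist A C = sqrt 3 * r" "dist B C = sqrt 3 * r"
      using assms by (simp_all add: A_def B_def C_def dist_norm cmod_def power2_eq_square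
          real_sqrt_mult flip: right_diff_distrib)
  qed
  ultimately show ?thesis
    using that by metis
qed

lemma measure_interior_place_regular_triangle:
  assumes "0 \<le> r"
  shows "measure lborel (interior (place (regular_polygon 3 r) p)) = 3 * sqrt 3 / 4 * r\<^sup>2"
proof -
  obtain A B C where T: "place (regular_polygon 3 r) p = convex hull {A, B, C}"
    and sides: "dist A B = sqrt 3 * r" "dist A C = sqrt 3 * r" "dist B C = sqrt 3 * r"
    using place_regular_triangle_equilateral[OF assms] .
  have "measure lborel (interior (convex hull {A, B, C})) = measure lborel (convex hull {A, B, C})"
    by (simp add: measure_interior_convex_compact finite_imp_compact_convex_hull)
  also have "\<dots> = sqrt 3 / 4 * (sqrt 3 * r)\<^sup>2"
    using assms sides by (intro measure_equilateral_triangle) simp_all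
  also have "\<dots> = 3 * sqrt 3 / 4 * r\<^sup>2"
    by (simp add: power_mult_distrib)
  finally show ?thesis
    unfolding T .
qed

lemma dist_le_in_place_regular_triangle:
  assumes "0 \<le> r" and "x \<in> place (regular_polygon 3 r) p" and "y \<in> place (regular_polygon 3 r) p"
  shows "dist x y \<le> sqrt 3 * r"
proof -
  obtain A B C where T: "place (regular_polygon 3 r) p = convex hull {A, B, C}"
    and "dist A B = sqrt 3 * r" "dist A C = sqrt 3 * r" "dist B C = sqrt 3 * r"
    using place_regular_triangle_equilateral[OF assms(1)] .
  then have sides: "dist u v \<le> sqrt 3 * r" if "u \<in> {A, B, C}" "v \<in> {A, B, C}" for u v
    using that assms(1) by (auto simp: dist_commute)
  obtain u v where uv: "u \<in> {A, B, C}" "v \<in> {A, B, C}" "dist x y \<le> dist u v"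
    using simplex_extremal_le_exists[of "{A, B, C}" x y] assms(2,3) unfolding T dist_norm by blast
  show ?thesis
    using sides[OF uv(1,2)] uv(3) by linarith
qed

definition overlapping_indices :: "complex set \<Rightarrow> nat \<Rightarrow> (nat \<Rightarrow> pose) \<Rightarrow> pose \<Rightarrow> nat set"
  where "overlapping_indices F n g p = {j. j < n \<and> overlap (place F p) (place F (g j))}"

lemma overlap_imp_near_centre:
  assumes "F \<subseteq> cball 0 \<rho>" and "overlap (place F p) (place F q)"
  obtains x where "x \<in> place F q" and "dist (snd p) x \<le> \<rho>"
proof -
  obtain x where "x \<in> place F p" "x \<in> place F q"
    using assms(2) interior_subset unfolding overlap_def by blast
  with place_subset_cball[OF assms(1), of p] show thesis
    using that by auto
qed

lemma card_overlapping_footprints_le: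
  fixes F :: "complex set" and K :: "pose \<Rightarrow> complex set"
  assumes "feasible F n g" and "0 \<le> R"
    and "\<And>q. K q \<in> sets lborel" and "\<And>q. K q \<subseteq> interior (place F q)"
    and "\<And>q. m \<le> measure lborel (K q)"
    and "\<And>q. overlap (place F p) (place F q) \<Longrightarrow> K q \<subseteq> cball (snd p) R"
  shows "real (card (overlapping_indices F n g p)) * m \<le> pi * R\<^sup>2"
proof -
  define J where "J = overlapping_indices F n g p"
  have disjoint: "disjoint_family_on (K \<circ> g) J"
    unfolding disjoint_family_on_def
  proof (intro ballI impI)
    fix i j assume "i \<in> J" "j \<in> J" "i \<noteq> j"
    then have "interior (place F (g i)) \<inter> interior (place F (g j)) = {}"
      using assms(1) by (auto simp: feasible_def overlap_def J_def overlapping_indices_def)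
    then show "(K \<circ> g) i \<inter> (K \<circ> g) j = {}"
      using assms(4)[of "g i"] assms(4)[of "g j"] by auto
  qed
  have "real (card J) * m \<le> measure lborel (cball (snd p) R)"
  proof (rule card_mult_le_measure_of_disjoint_family[OF _ disjoint])
    fix j assume "j \<in> J"
    then show "(K \<circ> g) j \<subseteq> cball (snd p) R"
      using assms(6) by (simp add: J_def overlapping_indices_def)
    show "(K \<circ> g) j \<in> sets lborel" "m \<le> measure lborel ((K \<circ> g) j)"
      using assms(3,5) by simp_all
  qed (simp_all add: J_def overlapping_indices_def fmeasurable_compact)
  also have "\<dots> = pi * R\<^sup>2"
    using assms(2) by (simp add: content_cball eval_unit_ball_vol)
  finally show ?thesis
    unfolding J_def .
qed

lemma card_overlapping_regular_triangles_le_18: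
  assumes "r > 0" and "feasible (regular_polygon 3 r) n g"
  shows "card (overlapping_indices (regular_polygon 3 r) n g p) \<le> 18"
    (is "card ?J \<le> 18")
proof -
  define F where "F = regular_polygon 3 r"
  have "real (card ?J) * (3 * sqrt 3 / 4 * r\<^sup>2) \<le> pi * ((1 + sqrt 3) * r)\<^sup>2"
    unfolding F_def[symmetric]
  proof (rule card_overlapping_footprints_le[where K = "\<lambda>q. interior (place F q)"])
    fix q assume "overlap (place F p) (place F q)"
    then obtain x where x: "x \<in> place F q" "dist (snd p) x \<le> r"
      using overlap_imp_near_centre regular_polygon_subset_cball assms(1) unfolding F_def
      by (metis less_imp_le)
    show "interior (place F q) \<subseteq> cball (snd p) ((1 + sqrt 3) * r)"
    proof
      fix y assume "y \<in> interior (place F q)"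
      then have "dist x y \<le> sqrt 3 * r"
        using dist_le_in_place_regular_triangle[of r x q y] x(1) assms(1) interior_subset
        unfolding F_def by auto
      then show "y \<in> cball (snd p) ((1 + sqrt 3) * r)"
        using x(2) dist_triangle[of "snd p" y x] by (simp add: algebra_simps)
    qed
  qed (use assms in \<open>simp_all add: F_def measure_interior_place_regular_triangle\<close>)
  then have "(real (card ?J) * (3 * sqrt 3 / 4)) * r\<^sup>2 \<le> (pi * (1 + sqrt 3)\<^sup>2) * r\<^sup>2"
    by (simp only: power_mult_distrib mult.assoc)
  then have "real (card ?J) * (3 * sqrt 3 / 4) \<le> pi * (1 + sqrt 3)\<^sup>2"
    using assms(1) by simp
  also have "\<dots> = pi * (4 + 2 * sqrt 3)"
    by (simp add: power2_eq_square algebra_simps)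
  also have "\<dots> \<le> 3.1416 * (4 + 2 * sqrt 3)"
    using pi_approx by (intro mult_right_mono) auto
  also have "\<dots> < 19 * (3 * sqrt 3 / 4)"
    using real_le_rsqrt[of "1.6" 3] by (simp add: power2_eq_square)
  finally have "real (card ?J) * (3 * sqrt 3 / 4) < 19 * (3 * sqrt 3 / 4)" .
  then show ?thesis
    by simp
qed

lemma card_overlapping_regular_polygons_le_14:
  assumes "d \<ge> 4" and "r > 0" and "feasible (regular_polygon d r) n g"
  shows "card (overlapping_indices (regular_polygon d r) n g p) \<le> 14"
    (is "card ?J \<le> 14")
proof -
  define F where "F = regular_polygon d r"
  define \<rho> where "\<rho> = 7/10 * r"
  have inscribed: "ball 0 \<rho> \<subseteq> F"
    unfolding F_def \<rho>_def using assms(1,2) by (rule ball_subset_regular_polygon_ge_4)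
  have "real (card ?J) * (pi * \<rho>\<^sup>2) \<le> pi * (27/10 * r)\<^sup>2"
    unfolding F_def[symmetric]
  proof (rule card_overlapping_footprints_le[where K = "\<lambda>q. ball (snd q) \<rho>"])
    fix q
    show "ball (snd q) \<rho> \<subseteq> interior (place F q)"
      using inscribed by (intro interior_maximal ball_subset_place) auto
    assume "overlap (place F p) (place F q)"
    then obtain x where x: "x \<in> place F q" "dist (snd p) x \<le> r"
      using overlap_imp_near_centre regular_polygon_subset_cball assms(2) unfolding F_def
      by (metis less_imp_le)
    moreover have "dist (snd q) x \<le> r"
      using place_subset_cball[OF regular_polygon_subset_cball, of r d q] x(1) assms(2)
      unfolding F_def by auto
    show "ball (snd q) \<rho> \<subseteq> cball (snd p) (27/10 * r)"
    proof
      fix y assume "y \<in> ball (snd q) \<rho>"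
      then show "y \<in> cball (snd p) (27/10 * r)"
        using x(2) \<open>dist (snd q) x \<le> r\<close> dist_triangle[of "snd p" y x]
          dist_triangle[of x y "snd q"] dist_commute[of x "snd q"]
        unfolding \<rho>_def by simp
    qed
  qed (use assms in \<open>simp_all add: F_def \<rho>_def content_ball eval_unit_ball_vol\<close>)
  then have "(real (card ?J) * 49) * (pi * r\<^sup>2) \<le> 729 * (pi * r\<^sup>2)"
    by (simp add: \<rho>_def power2_eq_square algebra_simps)
  then have "real (card ?J) * 49 \<le> 729"
    using assms(2) by simp
  then show ?thesis
    by simp
qed

theorem proposition2:
  fixes d n :: nat and r :: real and W :: "complex set"
    and s g :: "nat \<Rightarrow> pose"
  assumes "d \<ge> 3" and "r > 0"
    and "bounded W"
    and "\<forall>i<n. place (regular_polygon d r) (s i) \<subseteq> W"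
    and "\<forall>j<n. place (regular_polygon d r) (g j) \<subseteq> W"
    and "feasible (regular_polygon d r) n s"
    and "feasible (regular_polygon d r) n g"
  shows "(\<forall>i<n. start_degree (regular_polygon d r) n s g i \<le> 19) \<and>
         (\<forall>j<n. goal_degree (regular_polygon d r) n s g j \<le> 19)"
proof -
  define F where "F = regular_polygon d r"
  have count: "card (overlapping_indices F n h p) \<le> 19" if "feasible F n h" for p h
  proof (cases "d = 3")
    case True
    then show ?thesis
      using card_overlapping_regular_triangles_le_18[of r n h p] assms(2) that
      unfolding F_def by simp
  next
    case False
    then show ?thesis
      using card_overlapping_regular_polygons_le_14[of d r n h p] assms(1,2) that
      unfolding F_def by simp
  qed
  have "start_degree F n s g i = card (overlapping_indices F n g (s i))" if "i < n" for i
    using that by (simp add: start_degree_def dep_edges_def overlapping_indices_def)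
  moreover have "goal_degree F n s g j = card (overlapping_indices F n s (g j))" if "j < n" for j
    using that by (simp add: goal_degree_def dep_edges_def overlapping_indices_def overlap_sym)
  ultimately show ?thesis
    using count assms(6,7) unfolding F_def by simp
qed

end
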